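(* In the setting described in the context, suppose $T$ and $A$ are irreducible. Then for each $j\in\{1,\dots,M\}$ there exists a nonzero integer $k_j$ such that $(0,j)\to(k_j,j)$ in the Markov additive process with kernel $\{\Gamma_A(k)\}_{k\in\mathbb Z}$.
   Context: Let $M_0,M$ be positive integers. Consider a discrete-time Markov chain of M/G/1 type with state space $\{(0,j):1\le j\le M_0\}\cup\{(k,j):k\ge1,1\le j\le M\}$ and transition matrix in lexicographic order \[ T=\begin{pmatrix}B(0)&B(1)&B(2)&\cdots\\ C(0)&A(1)&A(2)&\cdots\\ O&A(0)&A(1)&\cdots\\ O&O&A(0)&\cdots\\ \vdots&\vdots&\vdots&\ddots\end{pmatrix}, \] with nonnegative blocks $A(k)$ ($M\times M$), $B(0)$, $B(k)$, $C(0)$ of compatible sizes, $A=\sum_{k\ge0}A(k)$ stochastic, $B(0)e+\sum_{k\ge1}B(k)e=e$. Let $\Gamma_A(k)=A(k+1)$ for $k\ge-1$ and $\Gamma_A(k)=O$ for $k\le-2$. The Markov additive process with kernel $\{\Gamma_A(k)\}$ on $\mathbb Z\times\{1,\dots,M\}$ moves from $(k_0,i)$ to $(k_0+k,j)$ with probability $[\Gamma_A(k)]_{i,j}$; $(k_1,j_1)\to(k_2,j_2)$ means $(k_2,j_2)$ is reached from $(k_1,j_1)$ with positive probability along some path of positive length. *)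

theory Defs
  imports Complex_Main
begin

text \<open>Blocks are represented as functions of (1-based) row/column indices:
  A k i j = [A(k)]_{i,j}  (1 \<le> i,j \<le> M),  B0 i j = [B(0)]_{i,j} (1 \<le> i,j \<le> M0),
  B k i j = [B(k)]_{i,j} (k \<ge> 1, 1 \<le> i \<le> M0, 1 \<le> j \<le> M),
  C0 i j = [C(0)]_{i,j} (1 \<le> i \<le> M, 1 \<le> j \<le> M0).\<close>

definition state_space :: "nat \<Rightarrow> nat \<Rightarrow> (nat \<times> nat) set" where
  "state_space M0 M = {(0, j) | j. 1 \<le> j \<and> j \<le> M0} \<union> {(k, j) | k j. 1 \<le> k \<and> 1 \<le> j \<and> j \<le> M}"

fun Tmat :: "(nat \<Rightarrow> nat \<Rightarrow> real) \<Rightarrow> (nat \<Rightarrow> nat \<Rightarrow> nat \<Rightarrow> real) \<Rightarrow>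
             (nat \<Rightarrow> nat \<Rightarrow> real) \<Rightarrow> (nat \<Rightarrow> nat \<Rightarrow> nat \<Rightarrow> real) \<Rightarrow>
             nat \<times> nat \<Rightarrow> nat \<times> nat \<Rightarrow> real" where
  "Tmat B0 B C0 A (k, i) (l, j) =
     (if k = 0 then (if l = 0 then B0 i j else B l i j)
      else if l = 0 then (if k = 1 then C0 i j else 0)
      else if k \<le> l + 1 then A (l + 1 - k) i j else 0)"

definition Asum :: "(nat \<Rightarrow> nat \<Rightarrow> nat \<Rightarrow> real) \<Rightarrow> nat \<Rightarrow> nat \<Rightarrow> real" where
  "Asum A i j = (\<Sum>k. A k i j)"

definition irreducible_on :: "'s set \<Rightarrow> ('s \<Rightarrow> 's \<Rightarrow> real) \<Rightarrow> bool" where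
  "irreducible_on S P \<longleftrightarrow>
     (\<forall>x\<in>S. \<forall>y\<in>S. (x, y) \<in> {(u, v). u \<in> S \<and> v \<in> S \<and> P u v > 0}\<^sup>+)"

definition GammaA :: "(nat \<Rightarrow> nat \<Rightarrow> nat \<Rightarrow> real) \<Rightarrow> int \<Rightarrow> nat \<Rightarrow> nat \<Rightarrow> real" where
  "GammaA A k i j = (if k \<ge> -1 then A (nat (k + 1)) i j else 0)"

definition MAP_step :: "nat \<Rightarrow> (nat \<Rightarrow> nat \<Rightarrow> nat \<Rightarrow> real) \<Rightarrow> ((int \<times> nat) \<times> (int \<times> nat)) set" where
  "MAP_step M A = {((k0, i), (k1, j)). 1 \<le> i \<and> i \<le> M \<and> 1 \<le> j \<and> j \<le> M \<and> GammaA A (k1 - k0) i j > 0}"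

definition MAP_leads :: "nat \<Rightarrow> (nat \<Rightarrow> nat \<Rightarrow> nat \<Rightarrow> real) \<Rightarrow> int \<times> nat \<Rightarrow> int \<times> nat \<Rightarrow> bool" where
  "MAP_leads M A x y \<longleftrightarrow> (x, y) \<in> (MAP_step M A)\<^sup>+"

end

theory Submission
  imports Defs
begin

text \<open>Suppose some phase \<open>j\<^sub>0\<close> admits no return to a nonzero level. Since \<open>A\<close> is
  irreducible, every phase is reached from \<open>(0, j\<^sub>0)\<close> and leads back to phase \<open>j\<^sub>0\<close>,
  so the level at which phase \<open>i\<close> is reached from \<open>(0, j\<^sub>0)\<close> is a well-defined
  number \<open>\<phi> i\<close>, and every step of the additive process changes the level by
  \<open>\<phi> j - \<phi> i\<close>. In the chain \<open>T\<close>, transitions between positive levels are steps of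
  the additive process, so \<open>l - \<phi> j\<close> is conserved until level 0 is hit, which is
  only possible from level 1. Starting from a level far above all the values of
  \<open>\<phi>\<close>, level 0 is therefore never reached, contradicting irreducibility of \<open>T\<close>.\<close>

lemma MAP_step_shift:
  assumes "((a, i), (b, j)) \<in> MAP_step M A"
  shows "((a + c, i), (b + c, j)) \<in> MAP_step M A"
  using assms by (simp add: MAP_step_def)

lemma MAP_leads_shift:
  assumes "MAP_leads M A (a, i) (b, j)"
  shows "MAP_leads M A (a + c, i) (b + c, j)"
proof -
  have "((fst x + c, snd x), (fst y + c, snd y)) \<in> (MAP_step M A)\<^sup>+"
    if "(x, y) \<in> (MAP_step M A)\<^sup>+" for x y
    using that
  proof (induction rule: trancl_induct)
    case (base y)
    then show ?case
      using MAP_step_shift[of "fst x" "snd x" "fst y" "snd y"] by (metis prod.collapse r_into_trancl')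
  next
    case (step y z)
    then show ?case
      using MAP_step_shift[of "fst y" "snd y" "fst z" "snd z"] by (metis prod.collapse trancl_into_trancl)
  qed
  then show ?thesis
    using assms unfolding MAP_leads_def by fastforce
qed

lemma MAP_leads_phases:
  assumes "MAP_leads M A (a, i) (b, j)"
  shows "i \<in> {1..M}" and "j \<in> {1..M}"
  using assms unfolding MAP_leads_def
  by (induction "(a, i)" "(b, j)" arbitrary: b j rule: trancl.induct) (auto simp: MAP_step_def)

lemma Asum_pos_imp_block_pos:
  assumes "\<And>k. A k i j \<ge> 0" and "Asum A i j > 0"
  obtains m where "A m i j > 0"
proof -
  have "\<exists>m. A m i j \<noteq> 0"
  proof (rule ccontr)
    assume "\<not> (\<exists>m. A m i j \<noteq> 0)"
    then have "Asum A i j = 0"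
      by (simp add: Asum_def)
    then show False
      using assms(2) by simp
  qed
  then obtain m where "A m i j \<noteq> 0"
    by blast
  with assms(1)[of m] have "A m i j > 0"
    by simp
  then show ?thesis
    by (rule that)
qed

lemma MAP_step_of_block_pos:
  assumes "A m i j > 0" and "i \<in> {1..M}" and "j \<in> {1..M}"
  shows "((x, i), (x + int m - 1, j)) \<in> MAP_step M A"
  using assms by (simp add: MAP_step_def GammaA_def)

lemma MAP_leads_of_Asum_irreducible:
  assumes nonneg: "\<And>k i j. i \<in> {1..M} \<Longrightarrow> j \<in> {1..M} \<Longrightarrow> A k i j \<ge> 0"
    and irred: "irreducible_on {1..M} (Asum A)"
    and "i \<in> {1..M}" and "j \<in> {1..M}"
  shows "\<exists>k. MAP_leads M A (x, i) (k, j)"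
proof -
  have edge: "\<exists>m. ((y, u), (y + int m - 1, v)) \<in> MAP_step M A"
    if uv: "u \<in> {1..M}" "v \<in> {1..M}" "Asum A u v > 0" for y u v
  proof -
    obtain m where "A m u v > 0"
      using Asum_pos_imp_block_pos[OF nonneg[OF uv(1,2)] uv(3)] by blast
    then show ?thesis
      using MAP_step_of_block_pos uv(1,2) by blast
  qed
  have "(i, j) \<in> {(u, v). u \<in> {1..M} \<and> v \<in> {1..M} \<and> Asum A u v > 0}\<^sup>+"
    using irred assms(3,4) unfolding irreducible_on_def by blast
  then show ?thesis
    unfolding MAP_leads_def
  proof (induction rule: trancl_induct)
    case (base v)
    then obtain m where "((x, i), (x + int m - 1, v)) \<in> MAP_step M A"
      using edge[of i v x] by auto
    then show ?case
      by blast
  next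
    case (step v w)
    then obtain k where "((x, i), (k, v)) \<in> (MAP_step M A)\<^sup>+"
      by blast
    moreover obtain m where "((k, v), (k + int m - 1, w)) \<in> MAP_step M A"
      using edge[of v w k] step.hyps(2) by auto
    ultimately have "((x, i), (k + int m - 1, w)) \<in> (MAP_step M A)\<^sup>+"
      by (rule trancl_into_trancl)
    then show ?case
      by blast
  qed
qed

lemma MAP_level_unique_of_no_return:
  assumes reach: "\<And>i j. i \<in> {1..M} \<Longrightarrow> j \<in> {1..M} \<Longrightarrow> \<exists>k. MAP_leads M A (0, i) (k, j)"
    and "j\<^sub>0 \<in> {1..M}"
    and no_return: "\<And>k. MAP_leads M A (0, j\<^sub>0) (k, j\<^sub>0) \<Longrightarrow> k = 0"
    and "MAP_leads M A (0, j\<^sub>0) (a, i)" and "MAP_leads M A (0, j\<^sub>0) (b, i)"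
  shows "a = b"
proof -
  obtain c where c: "MAP_leads M A (0, i) (c, j\<^sub>0)"
    using reach MAP_leads_phases(2)[OF assms(4)] assms(2) by blast
  have "MAP_leads M A (0, j\<^sub>0) (a + c, j\<^sub>0)" and "MAP_leads M A (0, j\<^sub>0) (b + c, j\<^sub>0)"
    using assms(4,5) MAP_leads_shift[OF c, of a] MAP_leads_shift[OF c, of b]
    unfolding MAP_leads_def by (auto simp: add.commute)
  then have "a + c = 0" and "b + c = 0"
    using no_return by blast+
  then show ?thesis
    by simp
qed

lemma MAP_step_potential_of_no_return:
  assumes reach: "\<And>i j. i \<in> {1..M} \<Longrightarrow> j \<in> {1..M} \<Longrightarrow> \<exists>k. MAP_leads M A (0, i) (k, j)"
    and j\<^sub>0: "j\<^sub>0 \<in> {1..M}"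
    and no_return: "\<And>k. MAP_leads M A (0, j\<^sub>0) (k, j\<^sub>0) \<Longrightarrow> k = 0"
  obtains \<phi> :: "nat \<Rightarrow> int"
  where "\<And>x i y j. ((x, i), (y, j)) \<in> MAP_step M A \<Longrightarrow> y - x = \<phi> j - \<phi> i"
proof
  define \<phi> where "\<phi> i = (THE a. MAP_leads M A (0, j\<^sub>0) (a, i))" for i
  note unique = MAP_level_unique_of_no_return[OF reach j\<^sub>0 no_return]
  have \<phi>: "MAP_leads M A (0, j\<^sub>0) (\<phi> i, i)" if i: "i \<in> {1..M}" for i
  proof -
    obtain a where a: "MAP_leads M A (0, j\<^sub>0) (a, i)"
      using reach j\<^sub>0 i by blast
    then have "\<phi> i = a"
      unfolding \<phi>_def using unique by blast
    then show ?thesis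
      using a by simp
  qed
  fix x i y j
  assume step: "((x, i), (y, j)) \<in> MAP_step M A"
  then have i: "i \<in> {1..M}" and j: "j \<in> {1..M}"
    by (auto simp: MAP_step_def)
  have "((\<phi> i, i), (y - x + \<phi> i, j)) \<in> MAP_step M A"
    using MAP_step_shift[OF step, of "\<phi> i - x"] by (simp add: algebra_simps)
  then have "MAP_leads M A (0, j\<^sub>0) (y - x + \<phi> i, j)"
    using \<phi>[OF i] unfolding MAP_leads_def by (meson trancl_into_trancl)
  then show "y - x = \<phi> j - \<phi> i"
    using unique \<phi>[OF j] by fastforce
qed

lemma Tmat_pos_to_level0:
  assumes "l \<ge> 1" and "Tmat B0 B C0 A (l, j) (0, j') > 0"
  shows "l = 1"
  using assms by (auto split: if_splits)

lemma Tmat_pos_levels_imp_MAP_step: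
  assumes "l \<ge> 1" "l' \<ge> 1" "j \<in> {1..M}" "j' \<in> {1..M}"
    and "Tmat B0 B C0 A (l, j) (l', j') > 0"
  shows "((int l, j), (int l', j')) \<in> MAP_step M A"
proof -
  have le: "l \<le> l' + 1" and "A (l' + 1 - l) j j' > 0"
    using assms by (auto split: if_splits)
  moreover have "nat (int l' - int l + 1) = l' + 1 - l"
    using le by simp
  ultimately show ?thesis
    using assms(3,4) by (auto simp: MAP_step_def GammaA_def)
qed

text \<open>Along a path of \<open>T\<close> from \<open>(k, i)\<close>, \<open>l - \<phi> j\<close> stays equal to \<open>k - \<phi> i\<close> as long as
  the level is positive; once level 0 has been reached, the second disjunct records
  the level-1 phase from which it was entered.\<close>

lemma Tmat_path_potential_invariant:
  fixes \<phi> :: "nat \<Rightarrow> int"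
  assumes potential: "\<And>x i y j. ((x, i), (y, j)) \<in> MAP_step M A \<Longrightarrow> y - x = \<phi> j - \<phi> i"
    and path: "((k, i), z) \<in> {(u, v). u \<in> state_space M0 M \<and> v \<in> state_space M0 M
                                       \<and> Tmat B0 B C0 A u v > 0}\<^sup>*"
    and "k \<ge> 1" and "i \<in> {1..M}"
  shows "(\<exists>l j. z = (l, j) \<and> l \<ge> 1 \<and> j \<in> {1..M} \<and> int l - \<phi> j = int k - \<phi> i)
         \<or> (\<exists>i'\<in>{1..M}. 1 - \<phi> i' = int k - \<phi> i)"
  using path
proof (induction rule: rtrancl_induct)
  case base
  then show ?case
    using \<open>k \<ge> 1\<close> \<open>i \<in> {1..M}\<close> by auto
next
  case (step y z)
  then show ?case
  proof (elim disjE exE conjE)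
    fix l j
    assume y: "y = (l, j)" "l \<ge> 1" "j \<in> {1..M}" "int l - \<phi> j = int k - \<phi> i"
    obtain l' j' where z: "z = (l', j')"
      by fastforce
    have T: "Tmat B0 B C0 A (l, j) (l', j') > 0" and "(l', j') \<in> state_space M0 M"
      using step(2) y z by (simp_all del: Tmat.simps)
    show ?case
    proof (cases "l' = 0")
      case True
      have "l = 1"
        using Tmat_pos_to_level0[OF y(2) T[unfolded True]] .
      then show ?thesis
        using y(3,4) by auto
    next
      case False
      then have "l' \<ge> 1" and j': "j' \<in> {1..M}"
        using \<open>(l', j') \<in> state_space M0 M\<close> by (auto simp: state_space_def)
      then have "int l' - int l = \<phi> j' - \<phi> j"
        using potential Tmat_pos_levels_imp_MAP_step[OF y(2) _ y(3) j' T] by blast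
      then show ?thesis
        using z \<open>l' \<ge> 1\<close> j' y(4) by auto
    qed
  qed blast
qed

theorem proposition2p8:
  fixes M0 M :: nat
    and A B :: "nat \<Rightarrow> nat \<Rightarrow> nat \<Rightarrow> real"
    and B0 C0 :: "nat \<Rightarrow> nat \<Rightarrow> real"
  assumes "M0 \<ge> 1" and "M \<ge> 1"
    and A_nonneg: "\<And>k i j. 1 \<le> i \<Longrightarrow> i \<le> M \<Longrightarrow> 1 \<le> j \<Longrightarrow> j \<le> M \<Longrightarrow> A k i j \<ge> 0"
    and B0_nonneg: "\<And>i j. 1 \<le> i \<Longrightarrow> i \<le> M0 \<Longrightarrow> 1 \<le> j \<Longrightarrow> j \<le> M0 \<Longrightarrow> B0 i j \<ge> 0"
    and B_nonneg: "\<And>k i j. 1 \<le> k \<Longrightarrow> 1 \<le> i \<Longrightarrow> i \<le> M0 \<Longrightarrow> 1 \<le> j \<Longrightarrow> j \<le> M \<Longrightarrow> B k i j \<ge> 0"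
    and C0_nonneg: "\<And>i j. 1 \<le> i \<Longrightarrow> i \<le> M \<Longrightarrow> 1 \<le> j \<Longrightarrow> j \<le> M0 \<Longrightarrow> C0 i j \<ge> 0"
    and A_summable: "\<And>i j. 1 \<le> i \<Longrightarrow> i \<le> M \<Longrightarrow> 1 \<le> j \<Longrightarrow> j \<le> M \<Longrightarrow> summable (\<lambda>k. A k i j)"
    and A_stoch: "\<And>i. 1 \<le> i \<Longrightarrow> i \<le> M \<Longrightarrow> (\<Sum>j=1..M. Asum A i j) = 1"
    and B_summable: "\<And>i j. 1 \<le> i \<Longrightarrow> i \<le> M0 \<Longrightarrow> 1 \<le> j \<Longrightarrow> j \<le> M \<Longrightarrow> summable (\<lambda>k. B (Suc k) i j)"
    and B_stoch: "\<And>i. 1 \<le> i \<Longrightarrow> i \<le> M0 \<Longrightarrow>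
        (\<Sum>j=1..M0. B0 i j) + (\<Sum>j=1..M. (\<Sum>k. B (Suc k) i j)) = 1"
    and C_stoch: "\<And>i. 1 \<le> i \<Longrightarrow> i \<le> M \<Longrightarrow>
        (\<Sum>j=1..M0. C0 i j) + (\<Sum>j=1..M. (\<Sum>k. A (Suc k) i j)) = 1"
    and T_irred: "irreducible_on (state_space M0 M) (Tmat B0 B C0 A)"
    and A_irred: "irreducible_on {1..M} (Asum A)"
  shows "\<forall>j\<in>{1..M}. \<exists>k::int. k \<noteq> 0 \<and> MAP_leads M A (0, j) (k, j)"
proof (rule ccontr)
  assume "\<not> ?thesis"
  then obtain j\<^sub>0 where j\<^sub>0: "j\<^sub>0 \<in> {1..M}" and no_return: "\<And>k. MAP_leads M A (0, j\<^sub>0) (k, j\<^sub>0) \<Longrightarrow> k = 0"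
    by blast
  have reach: "\<exists>k. MAP_leads M A (0, i) (k, j)" if "i \<in> {1..M}" "j \<in> {1..M}" for i j
    using MAP_leads_of_Asum_irreducible[OF _ A_irred that] A_nonneg by auto
  obtain \<phi> where potential: "\<And>x i y j. ((x, i), (y, j)) \<in> MAP_step M A \<Longrightarrow> y - x = \<phi> j - \<phi> i"
    using MAP_step_potential_of_no_return[OF reach j\<^sub>0 no_return] by blast
  define bound where "bound = (\<Sum>i\<in>{1..M}. \<bar>\<phi> i\<bar>)"
  define K where "K = nat (2 + 2 * bound)"
  have bound: "\<bar>\<phi> i\<bar> \<le> bound" if "i \<in> {1..M}" for i
    unfolding bound_def using that by (intro member_le_sum) auto
  have K: "int K = 2 + 2 * bound"
    unfolding K_def bound_def by (simp add: sum_nonneg)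
  have "(K, 1) \<in> state_space M0 M" and "(0, 1) \<in> state_space M0 M"
    using K bound[of 1] \<open>M0 \<ge> 1\<close> \<open>M \<ge> 1\<close> by (auto simp: state_space_def)
  then have "((K, 1), (0, 1)) \<in> {(u, v). u \<in> state_space M0 M \<and> v \<in> state_space M0 M
                                        \<and> Tmat B0 B C0 A u v > 0}\<^sup>+"
    using T_irred unfolding irreducible_on_def by blast
  moreover have "K \<ge> 1"
    using K bound[of 1] \<open>M \<ge> 1\<close> by auto
  ultimately obtain i' where i': "i' \<in> {1..M}" and "1 - \<phi> i' = int K - \<phi> 1"
    using Tmat_path_potential_invariant[where \<phi> = \<phi>, OF potential trancl_into_rtrancl]
      \<open>M \<ge> 1\<close> by fastforce
  then show False
    using K bound[of 1] bound[OF i'] \<open>M \<ge> 1\<close> by auto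
qed

end
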